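(* Let $f\in\mathbb{K}[[\underline{x}]][y]$ be a monic polynomial of degree $n$ which is prepared. Then $F(X_1,\dots,X_e,y)=f(X_1,X_2X_1,\dots,X_eX_1,y)\in\mathbb{K}[[\underline{X}]][y]$ is a quasi-ordinary polynomial.
   Context: $\mathbb{K}$ is an algebraically closed field of characteristic $0$, $\underline{x}=(x_1,\dots,x_e)$, $\underline{X}=(X_1,\dots,X_e)$. Write the $y$-discriminant of $f$ as $\Delta(\underline{x})=\sum_{d\ge0}u_d(\underline{x})$ with $u_d$ homogeneous of degree $d$, and let $a=\min\{d: u_d\neq0\}$. $f$ is called prepared if the coefficient $c_a$ of $x_1^a$ in $u_a$ is nonzero. A monic polynomial in $\mathbb{K}[[\underline{X}]][y]$ is quasi-ordinary if its $y$-discriminant is of the form $\underline{X}^{\alpha}\varepsilon(\underline{X})$ with $\alpha\in\mathbb{N}^e$ and $\varepsilon$ a unit of $\mathbb{K}[[\underline{X}]]$. *)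

theory Defs
  imports "HOL-Library.Poly_Mapping" "Subresultants.Resultant_Prelim"
begin

(* Multivariate formal power series over a commutative ring: coefficient functions on
   monomials x^m, m :: nat =>0 nat (finitely supported exponent vectors, variables indexed by nat).
   K[[x_1,...,x_e]] is the subring of series whose monomials only involve variables 1..e. *)

typedef 'a mps = "UNIV :: ((nat \<Rightarrow>\<^sub>0 nat) \<Rightarrow> 'a) set" morphisms coeff_mps Abs_mps ..
setup_lifting type_definition_mps

definition dv :: "(nat \<Rightarrow>\<^sub>0 nat) \<Rightarrow> (nat \<Rightarrow>\<^sub>0 nat) set" where
  "dv m = {p. \<exists>q. p + q = m}"

lemma finite_dv: "finite (dv m)"
proof -
  let ?B = "\<Union>i\<in>Poly_Mapping.keys m. {0..Poly_Mapping.lookup m i}"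
  have fin: "finite {f. \<forall>x. (x \<in> Poly_Mapping.keys m \<longrightarrow> f x \<in> ?B) \<and> (x \<notin> Poly_Mapping.keys m \<longrightarrow> f x = 0)}"
    by (rule finite_set_of_finite_funs) auto
  have "Poly_Mapping.lookup ` dv m \<subseteq> {f. \<forall>x. (x \<in> Poly_Mapping.keys m \<longrightarrow> f x \<in> ?B) \<and> (x \<notin> Poly_Mapping.keys m \<longrightarrow> f x = 0)}"
  proof
    fix f assume "f \<in> Poly_Mapping.lookup ` dv m"
    then obtain p q where f: "f = Poly_Mapping.lookup p" and pq: "p + q = m" by (auto simp: dv_def)
    have le: "f x \<le> Poly_Mapping.lookup m x" for x using pq f by (auto simp: lookup_add)
    show "f \<in> {f. \<forall>x. (x \<in> Poly_Mapping.keys m \<longrightarrow> f x \<in> ?B) \<and> (x \<notin> Poly_Mapping.keys m \<longrightarrow> f x = 0)}"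
      proof (intro CollectI allI conjI impI)
      fix x assume "x \<in> Poly_Mapping.keys m"
      then show "f x \<in> ?B" using le[of x] by (intro UN_I[of x]) auto
    next
      fix x assume "x \<notin> Poly_Mapping.keys m"
      then show "f x = 0" using le[of x] by (simp add: in_keys_iff)
    qed
  qed
  then have "finite (Poly_Mapping.lookup ` dv m)" using fin finite_subset by blast
  then show ?thesis by (rule finite_imageD) (simp add: inj_on_def poly_mapping_eqI)
qed

lemma dv_trans: "k \<in> dv m \<Longrightarrow> l \<in> dv k \<Longrightarrow> l \<in> dv m"
  by (auto simp: dv_def add.assoc)

lemma dv_right: "k = l + q \<Longrightarrow> q \<in> dv k"
  by (auto simp: dv_def add.commute)
lemma dv_left: "k = l + q \<Longrightarrow> l \<in> dv k"
  by (auto simp: dv_def)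
lemma dv_self: "m \<in> dv m" by (auto simp: dv_def intro: exI[of _ 0])

definition R :: "(nat \<Rightarrow>\<^sub>0 nat) \<Rightarrow> ((nat \<Rightarrow>\<^sub>0 nat) \<Rightarrow> 'a::zero) \<Rightarrow> (nat \<Rightarrow>\<^sub>0 nat) \<Rightarrow> 'a" where
  "R m f k = (if k \<in> dv m then f k else 0)"

lemma finite_R: "finite {k. R m f k \<noteq> 0}"
  by (rule finite_subset[OF _ finite_dv[of m]]) (auto simp: R_def split: if_splits)

lemma prod_fun_R:
  fixes f g :: "(nat \<Rightarrow>\<^sub>0 nat) \<Rightarrow> 'a::semiring_0"
  assumes "k \<in> dv m" shows "prod_fun f g k = prod_fun (R m f) (R m g) k"
  unfolding prod_fun_def
proof (intro arg_cong[where f=Sum_any] ext)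
  fix l
  have inner: "(\<lambda>q. R m g q when k = l + q) = (\<lambda>q. g q when k = l + q)"
    using assms by (auto simp: when_def R_def fun_eq_iff intro: dv_trans dv_right)
  show "f l * (\<Sum>q. g q when k = l + q) = R m f l * (\<Sum>q. R m g q when k = l + q)"
  proof (cases "l \<in> dv k")
    case True
    then have "R m f l = f l" using assms by (simp add: R_def dv_trans)
    then show ?thesis by (simp only: inner)
  next
    case False
    then have "(\<lambda>q. g q when k = l + q) = (\<lambda>q. 0)" by (auto simp: when_def dv_def fun_eq_iff)
    then show ?thesis using inner by (simp only: Sum_any.neutral mult_zero_right)
  qed
qed

lemma prod_fun_local:
  fixes f g :: "(nat \<Rightarrow>\<^sub>0 nat) \<Rightarrow> 'a::semiring_0"
  assumes "\<And>k. k \<in> dv m \<Longrightarrow> f k = f' k" "\<And>k. k \<in> dv m \<Longrightarrow> g k = g' k"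
  shows "prod_fun f g m = prod_fun f' g' m"
proof -
  have "R m f = R m f'" "R m g = R m g'" using assms by (auto simp: R_def fun_eq_iff)
  then show ?thesis using prod_fun_R[OF dv_self, of f g] prod_fun_R[OF dv_self, of f' g'] by simp
qed

lemma lookup_times_pm: "Poly_Mapping.lookup (a * b) = prod_fun (Poly_Mapping.lookup a) (Poly_Mapping.lookup b)"
  by transfer simp

lemma prod_fun_fin_assoc:
  fixes f g h :: "(nat \<Rightarrow>\<^sub>0 nat) \<Rightarrow> 'a::semiring_0"
  assumes "finite {k. f k \<noteq> 0}" "finite {k. g k \<noteq> 0}" "finite {k. h k \<noteq> 0}"
  shows "prod_fun (prod_fun f g) h = prod_fun f (prod_fun g h)"
proof -
  let ?A = "Abs_poly_mapping f" and ?B = "Abs_poly_mapping g" and ?C = "Abs_poly_mapping h"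
  have "Poly_Mapping.lookup (?A * ?B * ?C) = Poly_Mapping.lookup (?A * (?B * ?C))" by (simp add: mult.assoc)
  then show ?thesis using assms by (simp add: lookup_times_pm)
qed

lemma prod_fun_fin_comm:
  fixes f g :: "(nat \<Rightarrow>\<^sub>0 nat) \<Rightarrow> 'a::comm_semiring_0"
  assumes "finite {k. f k \<noteq> 0}" "finite {k. g k \<noteq> 0}"
  shows "prod_fun f g = prod_fun g f"
proof -
  let ?A = "Abs_poly_mapping f" and ?B = "Abs_poly_mapping g"
  have "Poly_Mapping.lookup (?A * ?B) = Poly_Mapping.lookup (?B * ?A)" by (simp add: mult.commute)
  then show ?thesis using assms by (simp add: lookup_times_pm)
qed

lemma prod_fun_fin_distrib:
  fixes f g h :: "(nat \<Rightarrow>\<^sub>0 nat) \<Rightarrow> 'a::semiring_0"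
  assumes "finite {k. f k \<noteq> 0}" "finite {k. g k \<noteq> 0}" "finite {k. h k \<noteq> 0}"
  shows "prod_fun (\<lambda>k. f k + g k) h = (\<lambda>k. prod_fun f h k + prod_fun g h k)"
proof -
  let ?A = "Abs_poly_mapping f" and ?B = "Abs_poly_mapping g" and ?C = "Abs_poly_mapping h"
  have "Poly_Mapping.lookup ((?A + ?B) * ?C) = Poly_Mapping.lookup (?A * ?C + ?B * ?C)" by (simp add: distrib_right)
  moreover have "Poly_Mapping.lookup (?A + ?B) = (\<lambda>k. f k + g k)"
    using assms by (simp add: lookup_add fun_eq_iff)
  ultimately show ?thesis using assms by (simp add: lookup_times_pm lookup_add fun_eq_iff)
qed

lemma prod_fun_one_left:
  fixes f :: "(nat \<Rightarrow>\<^sub>0 nat) \<Rightarrow> 'a::semiring_1"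
  shows "prod_fun (\<lambda>k. 1 when k = 0) f = f"
  by (simp add: prod_fun_def [abs_def] when_mult)

instantiation mps :: (comm_ring_1) comm_ring_1
begin
lift_definition zero_mps :: "'a mps" is "\<lambda>_. 0" .
lift_definition one_mps :: "'a mps" is "\<lambda>k. 1 when k = 0" .
lift_definition plus_mps :: "'a mps \<Rightarrow> 'a mps \<Rightarrow> 'a mps" is "\<lambda>f g k. f k + g k" .
lift_definition minus_mps :: "'a mps \<Rightarrow> 'a mps \<Rightarrow> 'a mps" is "\<lambda>f g k. f k - g k" .
lift_definition uminus_mps :: "'a mps \<Rightarrow> 'a mps" is "\<lambda>f k. - f k" .
lift_definition times_mps :: "'a mps \<Rightarrow> 'a mps \<Rightarrow> 'a mps" is prod_fun .
instance
proof
  fix a b c :: "'a mps"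
  show "a * b * c = a * (b * c)"
  proof (transfer, rule ext)
    fix f g h :: "(nat \<Rightarrow>\<^sub>0 nat) \<Rightarrow> 'a" and m
    have "prod_fun (prod_fun f g) h m = prod_fun (prod_fun (R m f) (R m g)) (R m h) m"
      by (rule prod_fun_local) (auto simp: R_def intro: prod_fun_R)
    also have "\<dots> = prod_fun (R m f) (prod_fun (R m g) (R m h)) m"
      by (simp add: prod_fun_fin_assoc finite_R)
    also have "\<dots> = prod_fun f (prod_fun g h) m"
      by (rule prod_fun_local) (auto simp: R_def intro: prod_fun_R[symmetric])
    finally show "prod_fun (prod_fun f g) h m = prod_fun f (prod_fun g h) m" .
  qed
  show "a * b = b * a"
  proof (transfer, rule ext)
    fix f g :: "(nat \<Rightarrow>\<^sub>0 nat) \<Rightarrow> 'a" and m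
    have "prod_fun f g m = prod_fun (R m f) (R m g) m" by (rule prod_fun_R[OF dv_self])
    also have "\<dots> = prod_fun (R m g) (R m f) m" by (simp add: prod_fun_fin_comm finite_R)
    also have "\<dots> = prod_fun g f m" by (rule prod_fun_R[OF dv_self, symmetric])
    finally show "prod_fun f g m = prod_fun g f m" .
  qed
  show "(a + b) * c = a * c + b * c"
  proof (transfer, rule ext)
    fix f g h :: "(nat \<Rightarrow>\<^sub>0 nat) \<Rightarrow> 'a" and m
    have "prod_fun (\<lambda>k. f k + g k) h m = prod_fun (\<lambda>k. R m f k + R m g k) (R m h) m"
      by (rule prod_fun_local) (auto simp: R_def)
    also have "\<dots> = prod_fun (R m f) (R m h) m + prod_fun (R m g) (R m h) m"
      by (simp add: prod_fun_fin_distrib finite_R)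
    also have "\<dots> = prod_fun f h m + prod_fun g h m"
      by (simp add: prod_fun_R[OF dv_self, symmetric])
    finally show "prod_fun (\<lambda>k. f k + g k) h m = prod_fun f h m + prod_fun g h m" .
  qed
  show "1 * a = a" by transfer (rule prod_fun_one_left)
  show "0 + a = a" by transfer simp
  show "a + b + c = a + (b + c)" by transfer (simp add: add.assoc)
  show "a + b = b + a" by transfer (simp add: add.commute)
  show "- a + a = 0" by transfer simp
  show "a - b = a + - b" by transfer simp
  show "(0::'a mps) \<noteq> 1" by transfer (simp add: fun_eq_iff when_def)
qed
end


definition mdeg :: "(nat \<Rightarrow>\<^sub>0 nat) \<Rightarrow> nat" where
  "mdeg m = (\<Sum>i\<in>Poly_Mapping.keys m. Poly_Mapping.lookup m i)"

definition series_in :: "nat \<Rightarrow> 'a::zero mps \<Rightarrow> bool" where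
  "series_in e g \<longleftrightarrow> (\<forall>m. coeff_mps g m \<noteq> 0 \<longrightarrow> Poly_Mapping.keys m \<subseteq> {1..e})"

definition poly_over_series :: "nat \<Rightarrow> 'a::comm_ring_1 mps poly \<Rightarrow> bool" where
  "poly_over_series e f \<longleftrightarrow> (\<forall>i. series_in e (coeff f i))"

definition mono_mps :: "(nat \<Rightarrow>\<^sub>0 nat) \<Rightarrow> 'a::{zero,one} mps" where
  "mono_mps \<alpha> = Abs_mps (\<lambda>k. if k = \<alpha> then 1 else 0)"

definition hom_part :: "nat \<Rightarrow> 'a::zero mps \<Rightarrow> 'a mps" where
  "hom_part d g = Abs_mps (\<lambda>m. if mdeg m = d then coeff_mps g m else 0)"

text \<open>formal derivative d/dy of a polynomial over an arbitrary commutative ring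
  (the library's pderiv requires absence of zero divisors)\<close>
definition yderiv :: "'a::comm_ring_1 poly \<Rightarrow> 'a poly" where
  "yderiv f = (\<Sum>i<degree f. monom (of_nat (Suc i) * coeff f (Suc i)) i)"

text \<open>y-discriminant of a monic polynomial f of degree n:
  (-1)^(n(n-1)/2) Res_y(f, df/dy)  (for monic f the leading coefficient is 1)\<close>
definition y_disc :: "'a::comm_ring_1 poly \<Rightarrow> 'a" where
  "y_disc f = (-1) ^ (degree f * (degree f - 1) div 2) * resultant f (yderiv f)"

definition prepared :: "'a::comm_ring_1 mps poly \<Rightarrow> bool" where
  "prepared f \<longleftrightarrow>
     (let \<Delta> = y_disc f; a = (LEAST d. hom_part d \<Delta> \<noteq> 0) in
       (\<exists>d. hom_part d \<Delta> \<noteq> 0) \<and> coeff_mps (hom_part a \<Delta>) (Poly_Mapping.single 1 a) \<noteq> 0)"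

text \<open>the substitution g(x_1,...,x_e) \<mapsto> g(X_1, X_2 X_1, ..., X_e X_1), written
  coefficientwise: the monomial x^beta goes to X_1^(beta_1+...+beta_e) X_2^beta_2 ... X_e^beta_e\<close>
definition blowup :: "nat \<Rightarrow> 'a::zero mps \<Rightarrow> 'a mps" where
  "blowup e g = Abs_mps (\<lambda>m.
     let s = (\<Sum>i\<in>{2..e}. Poly_Mapping.lookup m i) in
     if s \<le> Poly_Mapping.lookup m 1 then coeff_mps g (m - Poly_Mapping.single 1 s) else 0)"

definition quasi_ordinary :: "nat \<Rightarrow> 'a::comm_ring_1 mps poly \<Rightarrow> bool" where
  "quasi_ordinary e F \<longleftrightarrow> poly_over_series e F \<and> lead_coeff F = 1 \<and>
     (\<exists>\<alpha> \<epsilon>. Poly_Mapping.keys \<alpha> \<subseteq> {1..e} \<and> series_in e \<epsilon> \<and>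
        (\<exists>\<delta>. series_in e \<delta> \<and> \<epsilon> * \<delta> = 1) \<and>
        y_disc F = mono_mps \<alpha> * \<epsilon>)"

end

theory Submission
  imports Defs
begin

text \<open>
  The substitution \<open>x \<mapsto> (X\<^sub>1, X\<^sub>2 X\<^sub>1, \<dots>, X\<^sub>e X\<^sub>1)\<close> is a monomial map, hence an injective ring
  homomorphism of power series rings, and therefore commutes with the \<open>y\<close>-discriminant:
  the discriminant of \<open>F\<close> is the transform of \<open>\<Delta>\<close>. The transform of a monomial \<open>x\<^sup>l\<close> of total
  degree \<open>d\<close> has \<open>X\<^sub>1\<close>-exponent exactly \<open>d\<close>. Every monomial of \<open>\<Delta>\<close> has degree at least \<open>a\<close>, so the
  transform of \<open>\<Delta>\<close> is \<open>X\<^sub>1\<^sup>a \<epsilon>\<close>, and the constant term of \<open>\<epsilon>\<close> is the coefficient \<open>c\<^sub>a\<close> of \<open>x\<^sub>1\<^sup>a\<close>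
  in \<open>\<Delta>\<close>, which is non-zero as \<open>f\<close> is prepared; so \<open>\<epsilon>\<close> is a unit.
  That \<open>\<Delta>\<close> and the inverse of \<open>\<epsilon>\<close> only involve \<open>X\<^sub>1, \<dots>, X\<^sub>e\<close> follows in the same way from
  the truncation to these variables, another monomial map.
\<close>

lemma mps_eqI: "(\<And>m. coeff_mps a m = coeff_mps b m) \<Longrightarrow> a = b"
  by (metis coeff_mps_inject ext)

lemma dv_add_diff: "p \<in> dv m \<Longrightarrow> p + (m - p) = m"
  by (auto simp: dv_def)

lemma zero_dv: "0 \<in> dv m"
  by (auto simp: dv_def)

lemma dv_zero: "dv 0 = {0}"
proof -
  have "p = 0" if "p + q = (0 :: nat \<Rightarrow>\<^sub>0 nat)" for p q
    using that by (metis add_is_0 lookup_add lookup_zero poly_mapping_eqI)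
  then show ?thesis by (auto simp: dv_def)
qed

lemma prod_fun_eq_sum_dv:
  fixes f g :: "(nat \<Rightarrow>\<^sub>0 nat) \<Rightarrow> 'a::semiring_0"
  shows "prod_fun f g k = (\<Sum>l\<in>dv k. f l * g (k - l))"
proof -
  have inner: "Sum_any (\<lambda>q. g q when k = l + q) = (if l \<in> dv k then g (k - l) else 0)" for l
  proof -
    have eq: "(\<lambda>q. g q when k = l + q) = (\<lambda>q. if l \<in> dv k then g (k - l) when q = k - l else 0)"
      by (auto simp: fun_eq_iff when_def dv_def)
    show ?thesis by (subst eq) simp
  qed
  have "prod_fun f g k = Sum_any (\<lambda>l. f l * (if l \<in> dv k then g (k - l) else 0))"
    unfolding prod_fun_def inner ..
  also have "\<dots> = (\<Sum>l\<in>dv k. f l * (if l \<in> dv k then g (k - l) else 0))"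
    by (rule Sum_any.expand_superset) (auto simp: finite_dv)
  finally show ?thesis by simp
qed

lemma coeff_mps_times: "coeff_mps (a * b) m = (\<Sum>l\<in>dv m. coeff_mps a l * coeff_mps b (m - l))"
  by (simp add: times_mps.rep_eq prod_fun_eq_sum_dv)

lemma coeff_mps_one: "coeff_mps 1 m = (if m = 0 then 1 else 0)"
  by (simp add: one_mps.rep_eq when_def)

lemma coeff_mono_mps: "coeff_mps (mono_mps \<alpha>) m = (if m = \<alpha> then 1 else 0)"
  by (simp add: mono_mps_def Abs_mps_inverse)

lemma coeff_hom_part: "coeff_mps (hom_part d g) m = (if mdeg m = d then coeff_mps g m else 0)"
  by (simp add: hom_part_def Abs_mps_inverse)

lemma mono_mps_times_shift:
  assumes "\<And>m. coeff_mps g m \<noteq> 0 \<Longrightarrow> \<alpha> \<in> dv m"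
  shows "g = mono_mps \<alpha> * Abs_mps (\<lambda>m. coeff_mps g (m + \<alpha>))"
proof (rule mps_eqI)
  fix m
  have "coeff_mps (mono_mps \<alpha> * Abs_mps (\<lambda>m. coeff_mps g (m + \<alpha>))) m =
      (if \<alpha> \<in> dv m then coeff_mps g (m - \<alpha> + \<alpha>) else 0)"
    by (simp add: coeff_mps_times coeff_mono_mps Abs_mps_inverse if_distrib[of "\<lambda>x. x * _"]
        sum.delta[OF finite_dv] cong: if_cong)
  also have "\<dots> = coeff_mps g m"
    using assms[of m] dv_add_diff[of \<alpha> m] by (auto simp: add.commute)
  finally show "coeff_mps g m = coeff_mps (mono_mps \<alpha> * Abs_mps (\<lambda>m. coeff_mps g (m + \<alpha>))) m" ..
qed

lemma keys_add_nat: "Poly_Mapping.keys ((a::nat \<Rightarrow>\<^sub>0 nat) + b) = Poly_Mapping.keys a \<union> Poly_Mapping.keys b"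
  by (auto simp: in_keys_iff lookup_add)

lemma series_in_shift:
  assumes "series_in e g"
  shows "series_in e (Abs_mps (\<lambda>m. coeff_mps g (m + \<alpha>)))"
  unfolding series_in_def
proof (intro allI impI)
  fix m assume "coeff_mps (Abs_mps (\<lambda>m. coeff_mps g (m + \<alpha>))) m \<noteq> 0"
  then have "Poly_Mapping.keys (m + \<alpha>) \<subseteq> {1..e}"
    using assms by (simp add: series_in_def Abs_mps_inverse)
  then show "Poly_Mapping.keys m \<subseteq> {1..e}" by (simp add: keys_add_nat)
qed

lemma mdeg_add: "mdeg (a + b) = mdeg a + mdeg b"
proof -
  let ?K = "Poly_Mapping.keys a \<union> Poly_Mapping.keys b"
  have sum_keys: "mdeg c = (\<Sum>i\<in>?K. Poly_Mapping.lookup c i)" if "Poly_Mapping.keys c \<subseteq> ?K" for c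
    unfolding mdeg_def by (rule sum.mono_neutral_left) (use that in \<open>auto simp: in_keys_iff\<close>)
  show ?thesis
    by (simp add: sum_keys keys_add_nat lookup_add sum.distrib)
qed

lemma mdeg_pos: "p \<noteq> 0 \<Longrightarrow> 0 < mdeg p"
  by (metis mdeg_def keys_eq_empty lookup_not_eq_zero_eq_in_keys finite_keys gr0I sum_eq_0_iff ex_in_conv)

lemma mdeg_diff_less: "p \<in> dv m \<Longrightarrow> p \<noteq> 0 \<Longrightarrow> mdeg (m - p) < mdeg m"
  using mdeg_add[of p "m - p"] dv_add_diff[of p m] mdeg_pos[of p] by simp

function inverse_coeffs :: "((nat \<Rightarrow>\<^sub>0 nat) \<Rightarrow> 'a::field) \<Rightarrow> (nat \<Rightarrow>\<^sub>0 nat) \<Rightarrow> 'a" where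
  "inverse_coeffs g m = (if m = 0 then inverse (g 0)
     else - inverse (g 0) * (\<Sum>p\<in>dv m - {0}. g p * inverse_coeffs g (m - p)))"
  by auto
termination
  by (relation "measure (\<lambda>(g, m). mdeg m)") (auto intro: mdeg_diff_less)

declare inverse_coeffs.simps[simp del]

lemma mps_times_inverse_coeffs:
  fixes \<epsilon> :: "'a::field mps"
  assumes "coeff_mps \<epsilon> 0 \<noteq> 0"
  shows "\<epsilon> * Abs_mps (inverse_coeffs (coeff_mps \<epsilon>)) = 1"
proof (rule mps_eqI)
  fix m
  let ?g = "coeff_mps \<epsilon>"
  have "coeff_mps (\<epsilon> * Abs_mps (inverse_coeffs ?g)) m =
      ?g 0 * inverse_coeffs ?g m + (\<Sum>p\<in>dv m - {0}. ?g p * inverse_coeffs ?g (m - p))"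
    by (simp add: coeff_mps_times Abs_mps_inverse sum.remove[OF finite_dv zero_dv])
  also have "\<dots> = coeff_mps 1 m"
    using assms by (subst inverse_coeffs.simps) (simp add: coeff_mps_one dv_zero field_simps)
  finally show "coeff_mps (\<epsilon> * Abs_mps (inverse_coeffs ?g)) m = coeff_mps 1 m" .
qed

text \<open>The weight \<open>w\<close> makes truncation to a set of variables a monomial map as well.\<close>

definition monomial_map ::
    "((nat \<Rightarrow>\<^sub>0 nat) \<Rightarrow> (nat \<Rightarrow>\<^sub>0 nat)) \<Rightarrow> ((nat \<Rightarrow>\<^sub>0 nat) \<Rightarrow> 'a::comm_ring_1) \<Rightarrow> 'a mps \<Rightarrow> 'a mps" where
  "monomial_map \<psi> w g =
     Abs_mps (\<lambda>m. if m \<in> range \<psi> then w (inv_into UNIV \<psi> m) * coeff_mps g (inv_into UNIV \<psi> m) else 0)"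

locale monomial_map_hom =
  fixes \<psi> :: "(nat \<Rightarrow>\<^sub>0 nat) \<Rightarrow> (nat \<Rightarrow>\<^sub>0 nat)" and w :: "(nat \<Rightarrow>\<^sub>0 nat) \<Rightarrow> 'a::comm_ring_1"
  assumes exp_add: "\<And>a b. \<psi> (a + b) = \<psi> a + \<psi> b"
    and inj_exp: "inj \<psi>"
    and weight_add: "\<And>a b. w (a + b) = w a * w b"
    and weight_0: "w 0 = 1"
begin

lemma exp_0: "\<psi> 0 = 0"
  using exp_add[of 0 0] by simp

lemma coeff_monomial_map_image: "coeff_mps (monomial_map \<psi> w g) (\<psi> k) = w k * coeff_mps g k"
  by (simp add: monomial_map_def Abs_mps_inverse inj_exp)

lemma coeff_monomial_map_outside: "m \<notin> range \<psi> \<Longrightarrow> coeff_mps (monomial_map \<psi> w g) m = 0"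
  by (simp add: monomial_map_def Abs_mps_inverse)

lemma nonzero_product_term_in_image:
  assumes "p \<in> dv m" "coeff_mps (monomial_map \<psi> w g) p * coeff_mps (monomial_map \<psi> w h) (m - p) \<noteq> 0"
  obtains l l' where "p = \<psi> l" "m = \<psi> (l + l')"
proof -
  obtain l l' where "p = \<psi> l" "m - p = \<psi> l'"
    using assms(2) coeff_monomial_map_outside by (metis mult_zero_left mult_zero_right rangeE)
  then show thesis using that dv_add_diff[OF assms(1)] exp_add by metis
qed

lemma coeff_times_monomial_map_image:
  "coeff_mps (monomial_map \<psi> w g * monomial_map \<psi> w h) (\<psi> k) =
     (\<Sum>l\<in>dv k. coeff_mps (monomial_map \<psi> w g) (\<psi> l) * coeff_mps (monomial_map \<psi> w h) (\<psi> (k - l)))"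
proof -
  let ?G = "monomial_map \<psi> w g" and ?H = "monomial_map \<psi> w h"
  have "\<psi> ` dv k \<subseteq> dv (\<psi> k)"
    using exp_add by (auto simp: dv_def)
  moreover have "coeff_mps ?G p * coeff_mps ?H (\<psi> k - p) = 0" if "p \<in> dv (\<psi> k) - \<psi> ` dv k" for p
  proof (rule ccontr)
    assume "coeff_mps ?G p * coeff_mps ?H (\<psi> k - p) \<noteq> 0"
    moreover have "p \<in> dv (\<psi> k)" using that by blast
    ultimately obtain l l' where "p = \<psi> l" "\<psi> k = \<psi> (l + l')"
      using nonzero_product_term_in_image by metis
    then show False using that inj_exp by (auto simp: inj_eq dv_def)
  qed
  ultimately have "coeff_mps (?G * ?H) (\<psi> k) = (\<Sum>p\<in>\<psi> ` dv k. coeff_mps ?G p * coeff_mps ?H (\<psi> k - p))"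
    unfolding coeff_mps_times by (intro sum.mono_neutral_right finite_dv) auto
  also have "\<dots> = (\<Sum>l\<in>dv k. coeff_mps ?G (\<psi> l) * coeff_mps ?H (\<psi> k - \<psi> l))"
    by (rule sum.reindex_cong[of \<psi>]) (auto intro: inj_on_subset[OF inj_exp])
  also have "\<dots> = (\<Sum>l\<in>dv k. coeff_mps ?G (\<psi> l) * coeff_mps ?H (\<psi> (k - l)))"
    by (intro sum.cong refl) (metis dv_add_diff exp_add add_diff_cancel_left')
  finally show ?thesis .
qed

lemma monomial_map_times: "monomial_map \<psi> w (g * h) = monomial_map \<psi> w g * monomial_map \<psi> w h"
proof (rule mps_eqI)
  fix m
  show "coeff_mps (monomial_map \<psi> w (g * h)) m = coeff_mps (monomial_map \<psi> w g * monomial_map \<psi> w h) m"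
  proof (cases "m \<in> range \<psi>")
    case True
    then obtain k where k: "m = \<psi> k" by blast
    have weight_split: "w l * w (k - l) = w k" if "l \<in> dv k" for l
      using weight_add dv_add_diff[OF that] by metis
    have "coeff_mps (monomial_map \<psi> w (g * h)) m = (\<Sum>l\<in>dv k. w k * (coeff_mps g l * coeff_mps h (k - l)))"
      by (simp add: k coeff_monomial_map_image coeff_mps_times sum_distrib_left)
    also have "\<dots> = coeff_mps (monomial_map \<psi> w g * monomial_map \<psi> w h) m"
      unfolding k coeff_times_monomial_map_image coeff_monomial_map_image
      by (intro sum.cong refl) (simp add: weight_split[symmetric] mult_ac)
    finally show ?thesis .
  next
    case False
    have "coeff_mps (monomial_map \<psi> w g) p * coeff_mps (monomial_map \<psi> w h) (m - p) = 0"
      if "p \<in> dv m" for p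
      using nonzero_product_term_in_image[OF that] False by (metis rangeI)
    then show ?thesis
      using False by (simp add: coeff_monomial_map_outside coeff_mps_times)
  qed
qed

sublocale comm_ring_hom "monomial_map \<psi> w"
proof
  show "monomial_map \<psi> w 1 = 1"
  proof (rule mps_eqI)
    fix m
    show "coeff_mps (monomial_map \<psi> w 1) m = coeff_mps 1 m"
    proof (cases "m \<in> range \<psi>")
      case True
      then obtain k where k: "m = \<psi> k" by blast
      then have "m = 0 \<longleftrightarrow> k = 0" using exp_0 inj_exp by (metis injD)
      then show ?thesis using k by (simp add: coeff_monomial_map_image coeff_mps_one weight_0)
    next
      case False
      then have "m \<noteq> 0" using exp_0 by (metis rangeI)
      then show ?thesis using False by (simp add: coeff_monomial_map_outside coeff_mps_one)
    qed
  qed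
  fix g h
  show "monomial_map \<psi> w (g * h) = monomial_map \<psi> w g * monomial_map \<psi> w h"
    by (rule monomial_map_times)
  show "monomial_map \<psi> w (g + h) = monomial_map \<psi> w g + monomial_map \<psi> w h"
    by (rule mps_eqI) (simp add: monomial_map_def Abs_mps_inverse plus_mps.rep_eq algebra_simps)
next
  show "monomial_map \<psi> w 0 = 0"
    by (rule mps_eqI) (simp add: monomial_map_def Abs_mps_inverse zero_mps.rep_eq)
qed

end

lemma coeff_yderiv: "coeff (yderiv f) i = of_nat (Suc i) * coeff f (Suc i)"
  by (cases "i < degree f") (auto simp: yderiv_def coeff_sum coeff_eq_0)

lemma (in comm_ring_hom) map_poly_yderiv: "map_poly hom (yderiv f) = yderiv (map_poly hom f)"
  by (rule poly_eqI) (simp add: coeff_yderiv hom_distribs)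

lemma (in comm_ring_hom) y_disc_map_poly:
  assumes "degree (map_poly hom f) = degree f" "degree (map_poly hom (yderiv f)) = degree (yderiv f)"
  shows "y_disc (map_poly hom f) = hom (y_disc f)"
  using resultant_map_poly[OF assms]
  unfolding y_disc_def assms(1) map_poly_yderiv[symmetric] by (simp add: hom_distribs)

lemma (in inj_comm_ring_hom) y_disc_map_poly_inj: "y_disc (map_poly hom f) = hom (y_disc f)"
  by (simp add: y_disc_map_poly)

definition restrict_vars :: "nat \<Rightarrow> 'a::comm_ring_1 mps \<Rightarrow> 'a mps" where
  "restrict_vars e = monomial_map id (\<lambda>m. of_bool (Poly_Mapping.keys m \<subseteq> {1..e}))"

interpretation restrict_vars: comm_ring_hom "restrict_vars e"
proof -
  interpret monomial_map_hom id "\<lambda>m. of_bool (Poly_Mapping.keys m \<subseteq> {1..e})"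
    by unfold_locales (auto simp: keys_add_nat)
  show "comm_ring_hom (restrict_vars e)"
    unfolding restrict_vars_def by unfold_locales
qed

lemma coeff_restrict_vars:
  "coeff_mps (restrict_vars e g) m = (if Poly_Mapping.keys m \<subseteq> {1..e} then coeff_mps g m else 0)"
  by (simp add: restrict_vars_def monomial_map_def Abs_mps_inverse)

lemma series_in_iff_restrict_vars: "series_in e g \<longleftrightarrow> restrict_vars e g = g"
  by (auto simp: series_in_def coeff_restrict_vars coeff_mps_inject[symmetric] fun_eq_iff)

lemma series_in_restrict_vars: "series_in e (restrict_vars e g)"
  by (simp add: series_in_def coeff_restrict_vars)

lemma series_in_y_disc:
  assumes "poly_over_series e f"
  shows "series_in e (y_disc f)"
proof -
  have f: "map_poly (restrict_vars e) f = f"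
    using assms by (intro poly_eqI) (simp add: poly_over_series_def series_in_iff_restrict_vars)
  have "restrict_vars e (y_disc f) = y_disc f"
    using restrict_vars.y_disc_map_poly[where e = e and f = f] by (simp add: f restrict_vars.map_poly_yderiv)
  then show ?thesis by (simp add: series_in_iff_restrict_vars)
qed

lemma series_in_inverse:
  fixes \<epsilon> :: "'a::field mps"
  assumes "series_in e \<epsilon>" "coeff_mps \<epsilon> 0 \<noteq> 0"
  obtains \<delta> where "series_in e \<delta>" "\<epsilon> * \<delta> = 1"
proof
  let ?\<delta> = "Abs_mps (inverse_coeffs (coeff_mps \<epsilon>))"
  show "series_in e (restrict_vars e ?\<delta>)" by (rule series_in_restrict_vars)
  have "\<epsilon> * restrict_vars e ?\<delta> = restrict_vars e (\<epsilon> * ?\<delta>)"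
    using assms(1) by (simp add: restrict_vars.hom_mult series_in_iff_restrict_vars)
  then show "\<epsilon> * restrict_vars e ?\<delta> = 1" by (simp add: mps_times_inverse_coeffs[OF assms(2)])
qed

definition tail_degree :: "nat \<Rightarrow> (nat \<Rightarrow>\<^sub>0 nat) \<Rightarrow> nat" where
  "tail_degree e m = (\<Sum>i\<in>{2..e}. Poly_Mapping.lookup m i)"

definition blowup_exp :: "nat \<Rightarrow> (nat \<Rightarrow>\<^sub>0 nat) \<Rightarrow> (nat \<Rightarrow>\<^sub>0 nat)" where
  "blowup_exp e l = l + Poly_Mapping.single 1 (tail_degree e l)"

lemma tail_degree_add: "tail_degree e (a + b) = tail_degree e a + tail_degree e b"
  by (simp add: tail_degree_def lookup_add sum.distrib)

lemma tail_degree_single_1: "tail_degree e (Poly_Mapping.single 1 k) = 0"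
  by (auto simp: tail_degree_def lookup_single when_def intro!: sum.neutral)

lemma blowup_exp_single_1: "blowup_exp e (Poly_Mapping.single 1 k) = Poly_Mapping.single 1 k"
  unfolding blowup_exp_def tail_degree_single_1 by simp

lemma tail_degree_blowup_exp: "tail_degree e (blowup_exp e l) = tail_degree e l"
  unfolding blowup_exp_def tail_degree_add tail_degree_single_1 by simp

lemma blowup_exp_add: "blowup_exp e (a + b) = blowup_exp e a + blowup_exp e b"
  by (simp add: blowup_exp_def tail_degree_add single_add algebra_simps)

lemma inj_blowup_exp: "inj (blowup_exp e)"
  by (rule injI) (metis blowup_exp_def tail_degree_blowup_exp add_right_cancel)

lemma blowup_exp_diff:
  assumes "tail_degree e m \<le> Poly_Mapping.lookup m 1"
  shows "blowup_exp e (m - Poly_Mapping.single 1 (tail_degree e m)) = m"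
proof -
  have "tail_degree e (m - Poly_Mapping.single 1 (tail_degree e m)) = tail_degree e m"
    by (simp add: tail_degree_def lookup_minus lookup_single)
  then show ?thesis
    using assms unfolding blowup_exp_def
    by (intro poly_mapping_eqI) (auto simp: lookup_add lookup_minus lookup_single when_def)
qed

lemma range_blowup_exp: "m \<in> range (blowup_exp e) \<longleftrightarrow> tail_degree e m \<le> Poly_Mapping.lookup m 1"
  by (metis blowup_exp_diff blowup_exp_def tail_degree_blowup_exp lookup_add lookup_single_eq
      le_add2 rangeE rangeI)

lemma blowup_eq_monomial_map: "blowup e = monomial_map (blowup_exp e) (\<lambda>_. 1)"
proof
  fix g :: "'a::comm_ring_1 mps"
  have inv_eq: "inv_into UNIV (blowup_exp e) m = m - Poly_Mapping.single 1 (tail_degree e m)"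
    if "tail_degree e m \<le> Poly_Mapping.lookup m 1" for m
    using blowup_exp_diff[OF that] inj_blowup_exp by (metis inv_f_f)
  show "blowup e g = monomial_map (blowup_exp e) (\<lambda>_. 1) g"
    unfolding blowup_def monomial_map_def Let_def tail_degree_def[symmetric]
    by (intro arg_cong[where f = Abs_mps] ext) (auto simp: range_blowup_exp inv_eq)
qed

interpretation blowup_monomial_map: monomial_map_hom "blowup_exp e" "\<lambda>_. 1"
  by unfold_locales (auto simp: blowup_exp_add inj_blowup_exp)

lemma coeff_blowup_image:
  fixes g :: "'a::comm_ring_1 mps"
  shows "coeff_mps (blowup e g) (blowup_exp e l) = coeff_mps g l"
  by (simp add: blowup_eq_monomial_map blowup_monomial_map.coeff_monomial_map_image)

lemma coeff_blowup_nonzeroE: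
  fixes g :: "'a::comm_ring_1 mps"
  assumes "coeff_mps (blowup e g) m \<noteq> 0"
  obtains l where "m = blowup_exp e l" "coeff_mps g l \<noteq> 0"
  using assms blowup_monomial_map.coeff_monomial_map_outside coeff_blowup_image
  by (metis blowup_eq_monomial_map rangeE)

interpretation blowup: inj_comm_ring_hom "blowup e"
proof -
  interpret comm_ring_hom "blowup e"
    unfolding blowup_eq_monomial_map by unfold_locales
  show "inj_comm_ring_hom (blowup e)"
  proof
    fix g assume "blowup e g = 0"
    then show "g = 0"
      by (metis mps_eqI coeff_blowup_image hom_zero)
  qed
qed

lemma series_in_blowup:
  fixes g :: "'a::comm_ring_1 mps"
  assumes "series_in e g" "1 \<le> e"
  shows "series_in e (blowup e g)"
  unfolding series_in_def
proof (intro allI impI)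
  fix m assume "coeff_mps (blowup e g) m \<noteq> 0"
  then obtain l where "m = blowup_exp e l" "coeff_mps g l \<noteq> 0"
    by (rule coeff_blowup_nonzeroE)
  then show "Poly_Mapping.keys m \<subseteq> {1..e}"
    using assms by (auto simp: series_in_def blowup_exp_def keys_add_nat)
qed

lemma poly_over_series_blowup:
  "poly_over_series e f \<Longrightarrow> 1 \<le> e \<Longrightarrow> poly_over_series e (map_poly (blowup e) f)"
  by (simp add: poly_over_series_def series_in_blowup)

lemma lookup_blowup_exp_1:
  assumes "Poly_Mapping.keys l \<subseteq> {1..e}" "1 \<le> e"
  shows "Poly_Mapping.lookup (blowup_exp e l) 1 = mdeg l"
proof -
  have "mdeg l = (\<Sum>i\<in>{1..e}. Poly_Mapping.lookup l i)"
    unfolding mdeg_def by (rule sum.mono_neutral_left) (use assms in \<open>auto simp: in_keys_iff\<close>)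
  also have "\<dots> = Poly_Mapping.lookup l 1 + tail_degree e l"
    using assms(2) by (simp add: sum.atLeast_Suc_atMost tail_degree_def numeral_2_eq_2)
  finally show ?thesis by (simp add: blowup_exp_def lookup_add)
qed

lemma blowup_eq_mono_mps_times:
  fixes g :: "'a::comm_ring_1 mps"
  assumes "series_in e g" "1 \<le> e" and order: "\<And>m. coeff_mps g m \<noteq> 0 \<Longrightarrow> a \<le> mdeg m"
  obtains \<epsilon> where "series_in e \<epsilon>" "coeff_mps \<epsilon> 0 = coeff_mps g (Poly_Mapping.single 1 a)"
    "blowup e g = mono_mps (Poly_Mapping.single 1 a) * \<epsilon>"
proof
  let ?\<alpha> = "Poly_Mapping.single 1 a"
  let ?\<epsilon> = "Abs_mps (\<lambda>m. coeff_mps (blowup e g) (m + ?\<alpha>))"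
  show "series_in e ?\<epsilon>"
    by (rule series_in_shift) (rule series_in_blowup[OF assms(1,2)])
  show "coeff_mps ?\<epsilon> 0 = coeff_mps g ?\<alpha>"
    by (metis Abs_mps_inverse UNIV_I add_0 blowup_exp_single_1 coeff_blowup_image)
  have "?\<alpha> \<in> dv m" if nonzero: "coeff_mps (blowup e g) m \<noteq> 0" for m
  proof -
    obtain l where l: "m = blowup_exp e l" "coeff_mps g l \<noteq> 0"
      using nonzero by (rule coeff_blowup_nonzeroE)
    then have "a \<le> Poly_Mapping.lookup m 1"
      using assms lookup_blowup_exp_1[of l e] order[of l] by (auto simp: series_in_def)
    then have "m = ?\<alpha> + (m - ?\<alpha>)"
      by (intro poly_mapping_eqI) (auto simp: lookup_add lookup_minus lookup_single when_def)
    then show ?thesis by (rule dv_left)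
  qed
  then show "blowup e g = mono_mps ?\<alpha> * ?\<epsilon>"
    by (rule mono_mps_times_shift)
qed

lemma preparedE:
  assumes "prepared f"
  obtains a where "coeff_mps (y_disc f) (Poly_Mapping.single 1 a) \<noteq> 0"
    "\<And>m. coeff_mps (y_disc f) m \<noteq> 0 \<Longrightarrow> a \<le> mdeg m"
proof
  define a where "a = (LEAST d. hom_part d (y_disc f) \<noteq> 0)"
  show "coeff_mps (y_disc f) (Poly_Mapping.single 1 a) \<noteq> 0"
    using assms by (auto simp: prepared_def Let_def a_def[symmetric] coeff_hom_part split: if_splits)
  fix m assume "coeff_mps (y_disc f) m \<noteq> 0"
  then have "hom_part (mdeg m) (y_disc f) \<noteq> 0"
    by (metis coeff_hom_part zero_mps.rep_eq)
  then show "a \<le> mdeg m"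
    unfolding a_def by (rule Least_le)
qed

theorem mainTheorem15:
  fixes f :: "'a::{alg_closed_field, field_char_0} mps poly" and e n :: nat
  assumes "1 \<le> e"
    and "poly_over_series e f"
    and "lead_coeff f = 1"
    and "degree f = n"
    and "prepared f"
  shows "quasi_ordinary e (map_poly (blowup e) f)"
proof -
  obtain a where ca: "coeff_mps (y_disc f) (Poly_Mapping.single 1 a) \<noteq> 0"
    and order: "\<And>m. coeff_mps (y_disc f) m \<noteq> 0 \<Longrightarrow> a \<le> mdeg m"
    using preparedE[OF assms(5)] by blast
  obtain \<epsilon> where \<epsilon>: "series_in e \<epsilon>" "coeff_mps \<epsilon> 0 \<noteq> 0"
    and disc: "y_disc (map_poly (blowup e) f) = mono_mps (Poly_Mapping.single 1 a) * \<epsilon>"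
    using blowup_eq_mono_mps_times[OF series_in_y_disc[OF assms(2)] assms(1) order] ca
    by (metis blowup.y_disc_map_poly_inj)
  obtain \<delta> where "series_in e \<delta>" "\<epsilon> * \<delta> = 1"
    using series_in_inverse[OF \<epsilon>] .
  moreover have "lead_coeff (map_poly (blowup e) f) = 1"
    using assms(3) by simp
  moreover have "Poly_Mapping.keys (Poly_Mapping.single 1 a) \<subseteq> {1..e}"
    using assms(1) by simp
  ultimately show ?thesis
    unfolding quasi_ordinary_def using poly_over_series_blowup[OF assms(2,1)] \<epsilon>(1) disc by blast
qed

end
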